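(* In the currency market model #1 described in the context, assume $\{\lambda^{ij}_t>0\}=\{\lambda^{ji}_t>0\}$ for all $i,j\le d$ and $t\in\mathbb T$. Then for every $t\in\mathbb T$ and every $\eta\in L^0(\mathbb M^d;\mathcal H_t)$ such that $F_t(\eta)\in N^0_t(F)$, one has $F_t(-\eta)=-F_t(\eta)$ a.s. (so condition $\mathbf{HN^0}$ holds, since $\mathcal A=\mathbb M^d$).
   Context: Let $T\in\mathbb N$, $\mathbb T=\{0,\dots,T\}$, $d\ge1$, $(\Omega,\mathcal F,\mathbb P)$ a complete probability space and $\mathbb H=(\mathcal H_t)_{t\in\mathbb T}$ a filtration with $\mathcal H_T\subset\mathcal F$. $\mathbb M^d$ denotes real $d\times d$ matrices, $\mathbb M^d_+$ those with nonnegative entries; $L^0(E;\mathcal G)$ denotes $E$-valued $\mathcal G$-measurable random variables. Let $S=(S_t)_{t\in\mathbb T}$ be an $\mathcal F$-measurable $(0,\infty)^d$-valued process and $\lambda=(\lambda_t)_{t\in\mathbb T}$ an $\mathcal F$-measurable $\mathbb M^d_+$-valued process (neither necessarily $\mathbb H$-adapted); set $\tau^{ji}_t=S^i_t/S^j_t$. For $\rho,\ell\in\mathbb M^d_+$ define $f(\cdot;\rho,\ell):\mathbb M^d\to\mathbb R^d$ by $f^i(a;\rho,\ell)=\sum_{j=1}^d a^{ji}\big(1+\ell^{ij}\mathbf 1_{\{a^{ji}<0\}}\big)-a^{ij}\rho^{ij}\big(1+\ell^{ij}\mathbf 1_{\{a^{ij}\ge0\}}\big)$, $i\le d$. Set $\mathcal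 A=\mathbb M^d$ and $F_t(a)=f(a;\tau_t,\lambda_t)$, $t\in\mathbb T$. Let $N_t(F)=\{F_t(\eta):\eta\in L^0(\mathbb M^d;\mathcal H_t)\}$ and $N^0_t(F)=N_t(F)\cap(-N_t(F))$. *)

theory Defs
  imports "HOL-Probability.Probability"
begin

text \<open>Matrices in M^d are represented as real^'d^'d with a^{ij} = a$i$j,
  vectors in R^d as real^'d; the index type 'd is finite with CARD('d) = d.\<close>

definition filtration :: "'a measure \<Rightarrow> nat \<Rightarrow> (nat \<Rightarrow> 'a measure) \<Rightarrow> bool" where
  "filtration M T H \<longleftrightarrow>
     (\<forall>t\<le>T. subalgebra M (H t)) \<and> (\<forall>s t. s \<le> t \<longrightarrow> t \<le> T \<longrightarrow> sets (H s) \<subseteq> sets (H t))"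

definition fcost :: "real^'d^'d \<Rightarrow> real^'d^'d \<Rightarrow> real^'d^'d \<Rightarrow> real^'d" where
  "fcost a \<rho> l = (\<chi> i. \<Sum>j\<in>UNIV.
       a$j$i * (1 + (if a$j$i < 0 then l$i$j else 0))
     - a$i$j * \<rho>$i$j * (1 + (if a$i$j \<ge> 0 then l$i$j else 0)))"

definition tau :: "(nat \<Rightarrow> 'a \<Rightarrow> real^'d) \<Rightarrow> nat \<Rightarrow> 'a \<Rightarrow> real^'d^'d" where
  "tau S t \<omega> = (\<chi> j i. S t \<omega> $ i / S t \<omega> $ j)"

definition Fcur :: "(nat \<Rightarrow> 'a \<Rightarrow> real^'d) \<Rightarrow> (nat \<Rightarrow> 'a \<Rightarrow> real^'d^'d)
    \<Rightarrow> nat \<Rightarrow> real^'d^'d \<Rightarrow> 'a \<Rightarrow> real^'d" where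
  "Fcur S lam t a \<omega> = fcost a (tau S t \<omega>) (lam t \<omega>)"

definition Nset :: "'a measure \<Rightarrow> (nat \<Rightarrow> 'a measure)
    \<Rightarrow> (nat \<Rightarrow> real^'d^'d \<Rightarrow> 'a \<Rightarrow> real^'d) \<Rightarrow> nat \<Rightarrow> ('a \<Rightarrow> real^'d) set" where
  "Nset M H F t = {X. \<exists>\<eta> \<in> borel_measurable (H t). AE \<omega> in M. X \<omega> = F t (\<eta> \<omega>) \<omega>}"

definition N0set :: "'a measure \<Rightarrow> (nat \<Rightarrow> 'a measure)
    \<Rightarrow> (nat \<Rightarrow> real^'d^'d \<Rightarrow> 'a \<Rightarrow> real^'d) \<Rightarrow> nat \<Rightarrow> ('a \<Rightarrow> real^'d) set" where
  "N0set M H F t = Nset M H F t \<inter> {X. (\<lambda>\<omega>. - X \<omega>) \<in> Nset M H F t}"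

end

theory Submission
  imports Defs
begin

text \<open>Valued at the prices \<open>S\<^sub>t\<close>, the frictionless part of a transfer \<open>a\<close> is self-financing, so
  \<open>S\<^sub>t \<bullet> F\<^sub>t(a)\<close> is minus the total transaction cost of \<open>a\<close>, a sum of nonnegative terms.
  If \<open>F\<^sub>t(\<eta>) = -F\<^sub>t(\<eta>')\<close>, the total costs of \<open>\<eta>\<close> and \<open>\<eta>'\<close> add up to zero, so every transfer
  \<open>\<eta>\<^sup>j\<^sup>i \<noteq> 0\<close> is charged a zero rate; as the supports of \<open>\<lambda>\<^sup>i\<^sup>j\<close> and \<open>\<lambda>\<^sup>j\<^sup>i\<close> coincide, it pays no
  cost in either direction. On such transfers \<open>F\<^sub>t\<close> is linear, hence odd.\<close>

definition price_ratios :: "real^'d \<Rightarrow> real^'d^'d" where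
  "price_ratios s = (\<chi> j i. s$i / s$j)"

lemma tau_eq_price_ratios: "tau S t \<omega> = price_ratios (S t \<omega>)"
  by (simp add: tau_def price_ratios_def)

text \<open>The cost, in units of the numeraire, of the transfer \<open>a\<^sup>j\<^sup>i\<close> from currency \<open>j\<close> to \<open>i\<close>.\<close>
definition transfer_cost :: "real^'d \<Rightarrow> real^'d^'d \<Rightarrow> real^'d^'d \<Rightarrow> 'd \<Rightarrow> 'd \<Rightarrow> real" where
  "transfer_cost s a l i j = s$i * (if a$j$i < 0 then - a$j$i * l$i$j else a$j$i * l$j$i)"

lemma transfer_cost_nonneg:
  assumes "s$i > 0" and "l$i$j \<ge> 0" and "l$j$i \<ge> 0"
  shows "transfer_cost s a l i j \<ge> 0"
  using assms unfolding transfer_cost_def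
  by (auto intro!: mult_nonneg_nonneg simp: mult_le_0_iff)

lemma inner_fcost_price_ratios:
  fixes a l :: "real^'d^'d" and s :: "real^'d"
  assumes s: "\<And>i. s$i > 0"
  shows "s \<bullet> fcost a (price_ratios s) l = - (\<Sum>i\<in>UNIV. \<Sum>j\<in>UNIV. transfer_cost s a l i j)"
proof -
  have summand: "s$i * fcost a (price_ratios s) l $ i = (\<Sum>j\<in>UNIV. s$i * a$j$i - s$j * a$i$j
     + s$i * a$j$i * (if a$j$i < 0 then l$i$j else 0)
     - s$j * a$i$j * (if a$i$j \<ge> 0 then l$i$j else 0))" for i
    unfolding fcost_def price_ratios_def using s[of i]
    by (simp add: sum_distrib_left algebra_simps)
  have swap_frictionless: "(\<Sum>i\<in>UNIV. \<Sum>j\<in>UNIV. s$j * a$i$j) = (\<Sum>i\<in>UNIV. \<Sum>j\<in>UNIV. s$i * a$j$i)"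
    by (rule sum.swap)
  have swap_cost: "(\<Sum>i\<in>UNIV. \<Sum>j\<in>UNIV. s$j * a$i$j * (if a$i$j \<ge> 0 then l$i$j else 0))
     = (\<Sum>i\<in>UNIV. \<Sum>j\<in>UNIV. s$i * a$j$i * (if a$j$i \<ge> 0 then l$j$i else 0))"
    by (rule sum.swap)
  have "s \<bullet> fcost a (price_ratios s) l =
     (\<Sum>i\<in>UNIV. \<Sum>j\<in>UNIV. s$i * a$j$i) - (\<Sum>i\<in>UNIV. \<Sum>j\<in>UNIV. s$j * a$i$j)
     + (\<Sum>i\<in>UNIV. \<Sum>j\<in>UNIV. s$i * a$j$i * (if a$j$i < 0 then l$i$j else 0))
     - (\<Sum>i\<in>UNIV. \<Sum>j\<in>UNIV. s$j * a$i$j * (if a$i$j \<ge> 0 then l$i$j else 0))"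
    unfolding inner_vec_def inner_real_def summand by (simp add: sum.distrib sum_subtractf)
  also have "\<dots> = (\<Sum>i\<in>UNIV. \<Sum>j\<in>UNIV. s$i * a$j$i * (if a$j$i < 0 then l$i$j else 0)
        - s$i * a$j$i * (if a$j$i \<ge> 0 then l$j$i else 0))"
    unfolding swap_frictionless swap_cost by (simp add: sum_subtractf)
  also have "\<dots> = - (\<Sum>i\<in>UNIV. \<Sum>j\<in>UNIV. transfer_cost s a l i j)"
    unfolding transfer_cost_def sum_negf[symmetric] by (intro sum.cong refl) (auto simp: algebra_simps)
  finally show ?thesis .
qed

lemma transfer_cost_eq_0_if_fcost_cancels:
  fixes a b l :: "real^'d^'d" and s :: "real^'d"
  assumes s: "\<And>i. s$i > 0" and l: "\<And>i j. l$i$j \<ge> 0"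
    and cancel: "fcost a (price_ratios s) l + fcost b (price_ratios s) l = 0"
  shows "transfer_cost s a l i j = 0"
proof -
  have cost_nonneg: "transfer_cost s c l i j \<ge> 0" for c i j
    using transfer_cost_nonneg s l by blast
  have "s \<bullet> fcost a (price_ratios s) l + s \<bullet> fcost b (price_ratios s) l = 0"
    using cancel by (simp flip: inner_add_right)
  then have "(\<Sum>i\<in>UNIV. \<Sum>j\<in>UNIV. transfer_cost s a l i j)
      + (\<Sum>i\<in>UNIV. \<Sum>j\<in>UNIV. transfer_cost s b l i j) = 0"
    unfolding inner_fcost_price_ratios[OF s] by simp
  moreover have "(\<Sum>i\<in>UNIV. \<Sum>j\<in>UNIV. transfer_cost s a l i j) \<ge> 0"
    and "(\<Sum>i\<in>UNIV. \<Sum>j\<in>UNIV. transfer_cost s b l i j) \<ge> 0"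
    using cost_nonneg by (simp_all add: sum_nonneg)
  ultimately have "(\<Sum>i\<in>UNIV. \<Sum>j\<in>UNIV. transfer_cost s a l i j) = 0"
    by linarith
  then show ?thesis
    using cost_nonneg by (simp add: sum_nonneg sum_nonneg_eq_0_iff)
qed

lemma costless_transfer:
  assumes "transfer_cost s a l i j = 0" and "s$i > 0"
    and "l$i$j \<ge> 0" and "l$j$i \<ge> 0" and "l$i$j > 0 \<longleftrightarrow> l$j$i > 0"
  shows "a$j$i = 0 \<or> (l$i$j = 0 \<and> l$j$i = 0)"
  using assms unfolding transfer_cost_def by (auto split: if_splits)

lemma fcost_eq_linear_if_costless:
  assumes "\<And>i j. a$j$i = 0 \<or> (l$i$j = 0 \<and> l$j$i = 0)"
  shows "fcost a \<rho> l = (\<chi> i. \<Sum>j\<in>UNIV. a$j$i - a$i$j * \<rho>$i$j)"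
  unfolding fcost_def
proof (intro arg_cong[where f = vec_lambda] ext sum.cong refl)
  fix i j
  show "a$j$i * (1 + (if a$j$i < 0 then l$i$j else 0))
      - a$i$j * \<rho>$i$j * (1 + (if a$i$j \<ge> 0 then l$i$j else 0)) = a$j$i - a$i$j * \<rho>$i$j"
    using assms[of i j] assms[of j i] by auto
qed

lemma fcost_uminus_if_costless:
  assumes "\<And>i j. a$j$i = 0 \<or> (l$i$j = 0 \<and> l$j$i = 0)"
  shows "fcost (- a) \<rho> l = - fcost a \<rho> l"
proof -
  have "fcost (- a) \<rho> l = (\<chi> i. \<Sum>j\<in>UNIV. - a$j$i + a$i$j * \<rho>$i$j)"
    using assms by (subst fcost_eq_linear_if_costless) auto
  also have "\<dots> = - fcost a \<rho> l"
    using assms by (simp add: fcost_eq_linear_if_costless vec_eq_iff sum_negf[symmetric])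
  finally show ?thesis .
qed

lemma fcost_uminus_if_cancels:
  fixes a b l :: "real^'d^'d" and s :: "real^'d"
  assumes s: "\<And>i. s$i > 0" and l: "\<And>i j. l$i$j \<ge> 0"
    and supp: "\<And>i j. l$i$j > 0 \<longleftrightarrow> l$j$i > 0"
    and cancel: "fcost a (price_ratios s) l + fcost b (price_ratios s) l = 0"
  shows "fcost (- a) (price_ratios s) l = - fcost a (price_ratios s) l"
proof (rule fcost_uminus_if_costless)
  fix i j
  show "a$j$i = 0 \<or> (l$i$j = 0 \<and> l$j$i = 0)"
    using costless_transfer transfer_cost_eq_0_if_fcost_cancels[OF s l cancel] s l supp
    by blast
qed

theorem mainTheorem9:
  fixes M :: "'a measure" and T :: nat and H :: "nat \<Rightarrow> 'a measure"
    and S :: "nat \<Rightarrow> 'a \<Rightarrow> real^'d" and lam :: "nat \<Rightarrow> 'a \<Rightarrow> real^'d^'d"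
  assumes "prob_space M" and "complete_measure M"
    and "filtration M T H"
    and "\<And>t. t \<le> T \<Longrightarrow> S t \<in> borel_measurable M"
    and "\<And>t \<omega> i. t \<le> T \<Longrightarrow> \<omega> \<in> space M \<Longrightarrow> S t \<omega> $ i > 0"
    and "\<And>t. t \<le> T \<Longrightarrow> lam t \<in> borel_measurable M"
    and "\<And>t \<omega> i j. t \<le> T \<Longrightarrow> \<omega> \<in> space M \<Longrightarrow> lam t \<omega> $ i $ j \<ge> 0"
    and "\<And>t i j. t \<le> T \<Longrightarrow>
           {\<omega> \<in> space M. lam t \<omega> $ i $ j > 0} = {\<omega> \<in> space M. lam t \<omega> $ j $ i > 0}"
  shows "\<forall>t \<le> T. \<forall>\<eta> \<in> borel_measurable (H t).
           (\<lambda>\<omega>. Fcur S lam t (\<eta> \<omega>) \<omega>) \<in> N0set M H (Fcur S lam) t \<longrightarrow>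
           (AE \<omega> in M. Fcur S lam t (- \<eta> \<omega>) \<omega> = - Fcur S lam t (\<eta> \<omega>) \<omega>)"
proof (intro allI impI ballI)
  fix t \<eta> assume t: "t \<le> T"
    and "(\<lambda>\<omega>. Fcur S lam t (\<eta> \<omega>) \<omega>) \<in> N0set M H (Fcur S lam) t"
  then obtain \<eta>' where "AE \<omega> in M. - Fcur S lam t (\<eta> \<omega>) \<omega> = Fcur S lam t (\<eta>' \<omega>) \<omega>"
    unfolding N0set_def Nset_def by auto
  then show "AE \<omega> in M. Fcur S lam t (- \<eta> \<omega>) \<omega> = - Fcur S lam t (\<eta> \<omega>) \<omega>"
  proof (rule AE_mp[OF _ AE_I2], intro impI)
    fix \<omega> assume \<omega>: "\<omega> \<in> space M"
      and "- Fcur S lam t (\<eta> \<omega>) \<omega> = Fcur S lam t (\<eta>' \<omega>) \<omega>"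
    then have cancel: "fcost (\<eta> \<omega>) (price_ratios (S t \<omega>)) (lam t \<omega>)
        + fcost (\<eta>' \<omega>) (price_ratios (S t \<omega>)) (lam t \<omega>) = 0"
      unfolding Fcur_def tau_eq_price_ratios by (metis add.commute neg_eq_iff_add_eq_0)
    have supp: "lam t \<omega> $ i $ j > 0 \<longleftrightarrow> lam t \<omega> $ j $ i > 0" for i j
      using assms(8)[OF t, of i j] \<omega> by blast
    show "Fcur S lam t (- \<eta> \<omega>) \<omega> = - Fcur S lam t (\<eta> \<omega>) \<omega>"
      unfolding Fcur_def tau_eq_price_ratios
      using fcost_uminus_if_cancels[OF assms(5)[OF t \<omega>] assms(7)[OF t \<omega>] supp cancel] .
  qed
qed

end
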